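(* Let $q \in \mathbb{N}$. (a) For $\psi \in \mathcal{D}^q$ and $i=1,\dots, I$, it holds that $\phi_i \in \mathcal{C}^{\uparrow,q }$ and $\phi_i' (u) >0$ for all $u \in \mathbb{R}_+$. (b) For $\bar{\psi } \in \bar{\mathcal{D}}^q$, it holds that $\gamma_i \in \mathcal{C}^{\uparrow,q}$ for $i=0,1,\dots,I$, and $\gamma_0' (z)>0$ for all $z \in \mathbb{R}_+$. (c) The map $\Upsilon$ is a bijection from $\mathcal{D}^q$ to $\bar{\mathcal{D}}^q$.
   Context: Fix $I\in\mathbb{N}$. $\mathcal{C}=\{f\in C(\mathbb{R}_+,\mathbb{R}_+):f(0)=0,f\text{ non-decreasing}\}$, $\mathcal{C}^\uparrow=\{f\in\mathcal{C}:f\text{ strictly increasing},\lim_{u\to\infty}f(u)=\infty\}$. For $f:\mathbb{R}_+\to\mathbb{R}$, $f^{\mathbb{R}}$ extends $f$ by $0$ on $(-\infty,0)$ and $f^{\mathbb{R},\uparrow}$ extends $f$ by $u\mapsto u$ on $(-\infty,0)$; $\mathcal{C}^q=\{f\in\mathcal{C}:f^{\mathbb{R}}\in C^q(\mathbb{R},\mathbb{R})\}$, $\mathcal{C}^{\uparrow,q}=\{f\in\mathcal{C}^\uparrow:f^{\mathbb{R},\uparrow}\in C^q(\mathbb{R},\mathbb{R})\}$. For $\psi\in\mathcal{C}^I$, $\phi_i(u)=u-\sum_{j=1}^I2(i\wedge j)\psi_j(u)$. $\mathcal{D}=\{\psi\in\mathcal{C}^I:\phi_I\in\mathcal{C}^\uparrow,\sum_{i}i\sup_{u_1\ne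 u_2}\frac{\psi_i(u_1)-\psi_i(u_2)}{\phi_i(u_1)-\phi_i(u_2)}<\frac12\}$ (each $\phi_i\in\mathcal{C}^\uparrow$ then), $\bar{\mathcal{D}}=\{\bar\psi\in\mathcal{C}^I:\sum_ii\sup_{z_1\ne z_2}\frac{\bar\psi_i(z_1)-\bar\psi_i(z_2)}{z_1-z_2}<\frac12\}$, $\mathcal{D}^q=\mathcal{D}\cap(\mathcal{C}^q)^I$, $\bar{\mathcal{D}}^q=\bar{\mathcal{D}}\cap(\mathcal{C}^q)^I$. $\Upsilon(\psi)_i=\psi_i\circ\phi_i^{-1}$. For $\bar\psi\in\mathcal{C}^I$: $\gamma_I(z)=z$, $\gamma_i(z)=z+\sum_{j>i}2(j-i)\bar\psi_j(\gamma_j(z))$ for $i=I-1,\dots,0$. *)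

theory Defs
  imports "HOL-Analysis.Analysis"
begin

text \<open>Functions on R_+ are represented as real => real; only the values on {0..}
  matter for the classes C, C^up. Tuples (psi_1,...,psi_I) are functions nat => (real => real).\<close>

definition Cset :: "(real \<Rightarrow> real) set" where
  "Cset = {f. continuous_on {0..} f \<and> f 0 = 0 \<and> mono_on {0..} f \<and> (\<forall>u\<ge>0. 0 \<le> f u)}"

definition Cup :: "(real \<Rightarrow> real) set" where
  "Cup = {f \<in> Cset. strict_mono_on {0..} f \<and> filterlim f at_top at_top}"

definition ext0 :: "(real \<Rightarrow> real) \<Rightarrow> real \<Rightarrow> real" where
  "ext0 f x = (if x < 0 then 0 else f x)"

definition extup :: "(real \<Rightarrow> real) \<Rightarrow> real \<Rightarrow> real" where
  "extup f x = (if x < 0 then x else f x)"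

definition Ck :: "nat \<Rightarrow> (real \<Rightarrow> real) \<Rightarrow> bool" where
  "Ck q g \<longleftrightarrow> (\<forall>k<q. \<forall>x. ((deriv ^^ k) g) differentiable (at x))
                 \<and> continuous_on UNIV ((deriv ^^ q) g)"

definition Cq :: "nat \<Rightarrow> (real \<Rightarrow> real) set" where
  "Cq q = {f \<in> Cset. Ck q (ext0 f)}"

definition Cupq :: "nat \<Rightarrow> (real \<Rightarrow> real) set" where
  "Cupq q = {f \<in> Cup. Ck q (extup f)}"

definition phi :: "nat \<Rightarrow> (nat \<Rightarrow> real \<Rightarrow> real) \<Rightarrow> nat \<Rightarrow> real \<Rightarrow> real" where
  "phi I \<psi> i u = u - (\<Sum>j=1..I. 2 * real (min i j) * \<psi> j u)"

text \<open>Canonical representatives of tuples: components outside 1..I are 0, and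
  each component vanishes on the negative reals.\<close>
definition canon :: "nat \<Rightarrow> (nat \<Rightarrow> real \<Rightarrow> real) \<Rightarrow> bool" where
  "canon I \<psi> \<longleftrightarrow> (\<forall>i. i \<notin> {1..I} \<longrightarrow> \<psi> i = (\<lambda>_. 0)) \<and> (\<forall>i\<in>{1..I}. \<forall>u<0. \<psi> i u = 0)"

definition Dset :: "nat \<Rightarrow> (nat \<Rightarrow> real \<Rightarrow> real) set" where
  "Dset I = {\<psi>. canon I \<psi> \<and> (\<forall>i\<in>{1..I}. \<psi> i \<in> Cset) \<and> phi I \<psi> I \<in> Cup \<and>
     (\<Sum>i=1..I. ereal (real i) *
        (SUP p\<in>{(u1,u2). 0 \<le> u1 \<and> 0 \<le> u2 \<and> u1 \<noteq> u2}.
           ereal ((\<psi> i (fst p) - \<psi> i (snd p)) / (phi I \<psi> i (fst p) - phi I \<psi> i (snd p)))))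
     < ereal (1/2)}"

definition barDset :: "nat \<Rightarrow> (nat \<Rightarrow> real \<Rightarrow> real) set" where
  "barDset I = {b. canon I b \<and> (\<forall>i\<in>{1..I}. b i \<in> Cset) \<and>
     (\<Sum>i=1..I. ereal (real i) *
        (SUP p\<in>{(z1,z2). 0 \<le> z1 \<and> 0 \<le> z2 \<and> z1 \<noteq> z2}.
           ereal ((b i (fst p) - b i (snd p)) / (fst p - snd p))))
     < ereal (1/2)}"

definition Dq :: "nat \<Rightarrow> nat \<Rightarrow> (nat \<Rightarrow> real \<Rightarrow> real) set" where
  "Dq I q = {\<psi> \<in> Dset I. \<forall>i\<in>{1..I}. \<psi> i \<in> Cq q}"

definition barDq :: "nat \<Rightarrow> nat \<Rightarrow> (nat \<Rightarrow> real \<Rightarrow> real) set" where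
  "barDq I q = {b \<in> barDset I. \<forall>i\<in>{1..I}. b i \<in> Cq q}"

definition Ups :: "nat \<Rightarrow> (nat \<Rightarrow> real \<Rightarrow> real) \<Rightarrow> nat \<Rightarrow> real \<Rightarrow> real" where
  "Ups I \<psi> i z = (if i \<in> {1..I} \<and> 0 \<le> z
      then \<psi> i (the_inv_into {0..} (phi I \<psi> i) z) else 0)"

function gam :: "nat \<Rightarrow> (nat \<Rightarrow> real \<Rightarrow> real) \<Rightarrow> nat \<Rightarrow> real \<Rightarrow> real" where
  "gam I b i z = (if I \<le> i then z
      else z + (\<Sum>j\<in>{i<..I}. 2 * real (j - i) * b j (gam I b j z)))"
  by pat_completeness auto
termination
  by (relation "Wellfounded.measure (\<lambda>(I, b, i, z). I - i)") auto

end

theory Submission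
  imports Defs
begin

text \<open>Extending by the identity on the negative reals turns the members of Cup into increasing
  homeomorphisms of the real line, a class closed under composition and inversion; C^q-regularity
  is preserved by sums, products, composition and, where the derivative does not vanish,
  inversion.

  (a) phi_i is phi_I plus a nondecreasing function, hence again such a homeomorphism. If L_j is
  the Lipschitz constant of psi_j relative to phi_j, then psi_j' <= L_j phi_j' <= L_j, so
  phi_i' >= 1 - sum_j 2 j L_j > 0.

  (b) By downward induction each gamma_i is the identity plus a nondecreasing C^q function,
  so gamma_i' >= 1.

  (c) Reparametrising by phi_i turns the relative Lipschitz constant of psi_i into the ordinary
  one of psi_i o phi_i^-1, so Upsilon maps D^q into barD^q. Moreover gamma_i o phi_I = phi_i,
  hence phi_I = gamma_0^-1 and psi_i = b_i o gamma_i o gamma_0^-1 with b = Upsilon psi; for an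
  arbitrary b in barD^q this formula defines a preimage, since then phi_i = gamma_i o gamma_0^-1.\<close>

section \<open>Real derivatives and the classes C^q\<close>

lemma Ck_0: "Ck 0 g \<longleftrightarrow> continuous_on UNIV g"
  by (simp add: Ck_def)

lemma Ck_Suc: "Ck (Suc q) g \<longleftrightarrow> (\<forall>x. g differentiable (at x)) \<and> Ck q (deriv g)"
proof -
  have shift: "(deriv ^^ Suc k) g = (deriv ^^ k) (deriv g)" for k
    by (simp add: funpow_Suc_right del: funpow.simps)
  have "(\<forall>k<Suc q. \<forall>x. (deriv ^^ k) g differentiable (at x)) \<longleftrightarrow>
        (\<forall>x. g differentiable (at x)) \<and> (\<forall>k<q. \<forall>x. (deriv ^^ k) (deriv g) differentiable (at x))"
    by (auto simp: All_less_Suc2 shift simp del: funpow.simps)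
  then show ?thesis
    unfolding Ck_def shift by simp
qed

lemma Ck_SucI:
  assumes "\<And>x. (f has_real_derivative f' x) (at x)" and "Ck q f'"
  shows "Ck (Suc q) f"
proof -
  have "deriv f = f'"
    using assms(1) by (intro ext DERIV_imp_deriv)
  then show ?thesis
    using assms by (auto simp: Ck_Suc real_differentiable_def)
qed

lemma Ck_Suc_DERIV: "Ck (Suc q) f \<Longrightarrow> (f has_real_derivative deriv f x) (at x)"
  by (simp add: Ck_Suc DERIV_deriv_iff_real_differentiable)

lemma Ck_Suc_deriv: "Ck (Suc q) f \<Longrightarrow> Ck q (deriv f)"
  by (simp add: Ck_Suc)

lemma Ck_imp_continuous_on: "Ck q g \<Longrightarrow> continuous_on UNIV g"
  by (cases q) (auto simp: Ck_0 Ck_Suc intro!: continuous_at_imp_continuous_on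
      differentiable_imp_continuous_within)

lemma Ck_Suc_imp_Ck: "Ck (Suc q) g \<Longrightarrow> Ck q g"
proof (induction q arbitrary: g)
  case 0
  then show ?case
    by (simp add: Ck_0 Ck_imp_continuous_on)
next
  case (Suc q)
  then show ?case
    by (metis Ck_Suc)
qed

lemma Ck_imp_DERIV: "Ck q g \<Longrightarrow> 1 \<le> q \<Longrightarrow> (g has_real_derivative deriv g x) (at x)"
  by (cases q) (auto intro: Ck_Suc_DERIV)

lemma Ck_const: "Ck q (\<lambda>x. c)"
  by (induction q arbitrary: c) (auto simp: Ck_0 intro!: Ck_SucI[where f'="\<lambda>x. 0"] derivative_eq_intros)

lemma Ck_ident: "Ck q (\<lambda>x. x)"
  by (cases q) (auto simp: Ck_0 Ck_const intro!: Ck_SucI[where f'="\<lambda>x. 1"] derivative_eq_intros)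

lemma Ck_add: "Ck q f \<Longrightarrow> Ck q g \<Longrightarrow> Ck q (\<lambda>x. f x + g x)"
proof (induction q arbitrary: f g)
  case 0
  then show ?case
    by (auto simp: Ck_0 intro!: continuous_intros)
next
  case (Suc q)
  show ?case
    by (rule Ck_SucI[where f'="\<lambda>x. deriv f x + deriv g x"])
      (auto intro!: DERIV_add Ck_Suc_DERIV Suc.prems Suc.IH Ck_Suc_deriv)
qed

lemma Ck_mult: "Ck q f \<Longrightarrow> Ck q g \<Longrightarrow> Ck q (\<lambda>x. f x * g x)"
proof (induction q arbitrary: f g)
  case 0
  then show ?case
    by (auto simp: Ck_0 intro!: continuous_intros)
next
  case (Suc q)
  show ?case
  proof (rule Ck_SucI[where f'="\<lambda>x. deriv f x * g x + f x * deriv g x"])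
    show "((\<lambda>x. f x * g x) has_real_derivative deriv f x * g x + f x * deriv g x) (at x)" for x
      using DERIV_mult[OF Ck_Suc_DERIV[OF Suc.prems(1)] Ck_Suc_DERIV[OF Suc.prems(2)]]
      by (simp add: mult.commute)
    show "Ck q (\<lambda>x. deriv f x * g x + f x * deriv g x)"
      using Suc.prems Ck_Suc_imp_Ck[OF Suc.prems(1)] Ck_Suc_imp_Ck[OF Suc.prems(2)]
      by (intro Ck_add Suc.IH Ck_Suc_deriv) assumption+
  qed
qed

lemma Ck_cmult: "Ck q f \<Longrightarrow> Ck q (\<lambda>x. c * f x)"
  by (rule Ck_mult[OF Ck_const])

lemma Ck_diff: "Ck q f \<Longrightarrow> Ck q g \<Longrightarrow> Ck q (\<lambda>x. f x - g x)"
  using Ck_add[OF _ Ck_cmult[of q g "-1"]] by simp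

lemma Ck_sum: "finite A \<Longrightarrow> (\<And>j. j \<in> A \<Longrightarrow> Ck q (f j)) \<Longrightarrow> Ck q (\<lambda>x. \<Sum>j\<in>A. f j x)"
  by (induction A rule: finite_induct) (auto intro!: Ck_add Ck_const)

lemma Ck_compose: "Ck q f \<Longrightarrow> Ck q g \<Longrightarrow> Ck q (\<lambda>x. f (g x))"
proof (induction q arbitrary: f g)
  case 0
  then show ?case
    by (auto simp: Ck_0 intro!: continuous_on_compose2[of UNIV f UNIV g])
next
  case (Suc q)
  show ?case
  proof (rule Ck_SucI[where f'="\<lambda>x. deriv f (g x) * deriv g x"])
    show "((\<lambda>x. f (g x)) has_real_derivative deriv f (g x) * deriv g x) (at x)" for x
      by (rule DERIV_chain2[OF Ck_Suc_DERIV[OF Suc.prems(1)] Ck_Suc_DERIV[OF Suc.prems(2)]])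
    show "Ck q (\<lambda>x. deriv f (g x) * deriv g x)"
      using Suc.IH[OF Ck_Suc_deriv[OF Suc.prems(1)] Ck_Suc_imp_Ck[OF Suc.prems(2)]]
        Ck_Suc_deriv[OF Suc.prems(2)]
      by (rule Ck_mult)
  qed
qed

lemma Ck_inverse: "Ck q h \<Longrightarrow> (\<And>x. h x \<noteq> 0) \<Longrightarrow> Ck q (\<lambda>x. inverse (h x))"
proof (induction q arbitrary: h)
  case 0
  then show ?case
    by (auto simp: Ck_0 intro!: continuous_intros)
next
  case (Suc q)
  have IH: "Ck q (\<lambda>x. inverse (h x))"
    using Suc.IH Ck_Suc_imp_Ck Suc.prems by blast
  show ?case
  proof (rule Ck_SucI[where f'="\<lambda>x. - 1 * (deriv h x * (inverse (h x) * inverse (h x)))"])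
    show "((\<lambda>x. inverse (h x)) has_real_derivative
            - 1 * (deriv h x * (inverse (h x) * inverse (h x)))) (at x)" for x
      using DERIV_inverse_fun[OF Ck_Suc_DERIV[OF Suc.prems(1)] Suc.prems(2)]
      by (simp add: power2_eq_square)
    show "Ck q (\<lambda>x. - 1 * (deriv h x * (inverse (h x) * inverse (h x))))"
      using Suc.prems by (intro Ck_cmult Ck_mult IH Ck_Suc_deriv)
  qed
qed

lemma bij_inv_has_real_derivative:
  assumes "bij g" and g': "\<And>x. (g has_real_derivative g' x) (at x)" and "g' (inv g y) \<noteq> 0"
  shows "(inv g has_real_derivative inverse (g' (inv g y))) (at y)"
proof -
  have g_inv: "g (inv g z) = z" and inv_g: "inv g (g z) = z" for z
    using \<open>bij g\<close> by (simp_all add: bij_is_surj surj_f_inv_f bij_is_inj)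
  have "isCont (inv g) (g (inv g y))"
    by (rule isCont_inverse_function[where d=1]) (simp_all add: inv_g DERIV_isCont[OF g'])
  then have "isCont (inv g) y"
    by (simp add: g_inv)
  then show ?thesis
    by (intro DERIV_inverse_function[where f=g and a="y - 1" and b="y + 1"]) (simp_all add: assms g_inv)
qed

lemma Ck_inv:
  assumes "Ck q g" "1 \<le> q" "\<And>x. deriv g x \<noteq> 0" "bij g"
  shows "Ck q (inv g)"
  using assms(1,2)
proof (induction q)
  case 0
  then show ?case by simp
next
  case (Suc q)
  have g': "(g has_real_derivative deriv g x) (at x)" for x
    by (rule Ck_Suc_DERIV[OF Suc.prems(1)])
  have inv_g': "(inv g has_real_derivative inverse (deriv g (inv g y))) (at y)" for y
    by (rule bij_inv_has_real_derivative[OF \<open>bij g\<close> g' assms(3)])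
  have "Ck q (inv g)"
  proof (cases q)
    case 0
    then show ?thesis
      using inv_g' by (auto simp: Ck_0 intro!: continuous_at_imp_continuous_on DERIV_isCont)
  next
    case (Suc _)
    then show ?thesis
      using Suc.IH Ck_Suc_imp_Ck[OF Suc.prems(1)] by simp
  qed
  then have "Ck q (\<lambda>y. inverse (deriv g (inv g y)))"
    using assms(3) by (intro Ck_inverse Ck_compose[OF Ck_Suc_deriv[OF Suc.prems(1)]])
  then show ?case
    by (rule Ck_SucI[OF inv_g'])
qed

lemma has_real_derivative_nonneg_if_mono_on:
  fixes h :: "real \<Rightarrow> real"
  assumes "mono_on {x..} h" and "(h has_real_derivative l) (at x)"
  shows "0 \<le> l"
proof (rule ccontr)
  assume "\<not> 0 \<le> l"
  then obtain d where "d > 0" and "\<And>t. 0 < t \<Longrightarrow> t < d \<Longrightarrow> h (x + t) < h x"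
    using DERIV_neg_dec_right[OF assms(2)] by force
  then have "h (x + d / 2) < h x"
    by simp
  moreover have "h x \<le> h (x + d / 2)"
    using \<open>d > 0\<close> by (intro mono_onD[OF assms(1)]) auto
  ultimately show False
    by simp
qed

lemma has_real_derivative_le_if_increment_le:
  fixes f g :: "real \<Rightarrow> real"
  assumes "(f has_real_derivative f') (at x)" and "(g has_real_derivative g') (at x)"
    and "\<And>y z. x \<le> y \<Longrightarrow> y \<le> z \<Longrightarrow> g z - g y \<le> L * (f z - f y)"
  shows "g' \<le> L * f'"
proof -
  have "mono_on {x..} (\<lambda>y. L * f y - g y)"
    using assms(3) by (intro mono_onI) (simp add: algebra_simps)
  moreover have "((\<lambda>y. L * f y - g y) has_real_derivative L * f' - g') (at x)"
    by (rule DERIV_diff[OF DERIV_cmult[OF assms(1)] assms(2)])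
  ultimately show ?thesis
    using has_real_derivative_nonneg_if_mono_on by fastforce
qed

lemma has_real_derivative_vanishing_neg:
  assumes "\<And>u. u < 0 \<Longrightarrow> g u = 0" and "x < 0"
  shows "(g has_real_derivative 0) (at x)"
  by (rule has_field_derivative_transform_within_open[where f="\<lambda>_. 0" and S="{..<0}"])
    (use assms in auto)

section \<open>Increasing homeomorphisms fixing the negative reals\<close>

text \<open>Exactly the functions extup f with f in Cup: the increasing homeomorphisms of the real
  line that fix every negative number.\<close>
definition Cup_homeo :: "(real \<Rightarrow> real) \<Rightarrow> bool" where
  "Cup_homeo f \<longleftrightarrow> continuous_on UNIV f \<and> strict_mono f \<and> (\<forall>x<0. f x = x) \<and> f 0 = 0
     \<and> filterlim f at_top at_top"

context
  fixes f :: "real \<Rightarrow> real"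
  assumes f: "Cup_homeo f"
begin

lemma Cup_homeo_less_iff: "f x < f y \<longleftrightarrow> x < y"
  using f by (simp add: Cup_homeo_def strict_mono_less)

lemma Cup_homeo_le_iff: "f x \<le> f y \<longleftrightarrow> x \<le> y"
  using f by (simp add: Cup_homeo_def strict_mono_less_eq)

lemma Cup_homeo_0: "f 0 = 0"
  using f by (simp add: Cup_homeo_def)

lemma Cup_homeo_neg: "x < 0 \<Longrightarrow> f x = x"
  using f by (simp add: Cup_homeo_def)

lemma Cup_homeo_nonneg_iff: "0 \<le> f x \<longleftrightarrow> 0 \<le> x"
  using Cup_homeo_le_iff[of 0 x] by (simp add: Cup_homeo_0)

lemma Cup_homeo_inj: "inj f"
  using f by (simp add: Cup_homeo_def strict_mono_on_imp_inj_on)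

lemma Cup_homeo_surj: "surj f"
proof -
  have "\<exists>x. f x = y" for y
  proof (cases "y < 0")
    case True
    then show ?thesis
      using Cup_homeo_neg by blast
  next
    case False
    obtain N where N: "\<And>x. N \<le> x \<Longrightarrow> y \<le> f x"
      using f unfolding Cup_homeo_def filterlim_at_top eventually_at_top_linorder by blast
    have "continuous_on {0..max N 0} f"
      using f unfolding Cup_homeo_def by (auto intro: continuous_on_subset)
    then show ?thesis
      using IVT'[of f 0 y "max N 0"] N[of "max N 0"] False by (auto simp: Cup_homeo_0)
  qed
  then show ?thesis
    by (metis surjI)
qed

lemma Cup_homeo_bij: "bij f"
  by (simp add: bij_def Cup_homeo_inj Cup_homeo_surj)

lemma Cup_homeo_f_inv: "f (inv f y) = y"
  by (simp add: Cup_homeo_surj surj_f_inv_f)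

lemma Cup_homeo_inv_f: "inv f (f x) = x"
  by (simp add: Cup_homeo_inj)

lemma Cup_homeo_the_inv_into:
  assumes "0 \<le> z"
  shows "the_inv_into {0..} f z = inv f z"
proof (rule the_inv_into_f_eq)
  show "inj_on f {0..}"
    using Cup_homeo_inj by (metis inj_on_subset subset_UNIV)
  show "inv f z \<in> {0..}"
    using Cup_homeo_nonneg_iff[of "inv f z"] assms by (simp add: Cup_homeo_f_inv)
qed (rule Cup_homeo_f_inv)

lemma Cup_homeo_inv: "Cup_homeo (inv f)"
  unfolding Cup_homeo_def
proof (intro conjI allI impI)
  have f_cont: "isCont f x" for x
    using f by (simp add: Cup_homeo_def continuous_on_eq_continuous_at)
  have "isCont (inv f) (f (inv f y))" for y
    by (rule isCont_inverse_function[where d=1 and f=f]) (simp_all add: Cup_homeo_inv_f f_cont)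
  then show "continuous_on UNIV (inv f)"
    by (simp add: Cup_homeo_f_inv continuous_on_eq_continuous_at)
  show "strict_mono (inv f)"
  proof (rule strict_monoI)
    fix x y :: real
    assume "x < y"
    then show "inv f x < inv f y"
      using Cup_homeo_less_iff[of "inv f x" "inv f y"] by (simp add: Cup_homeo_f_inv)
  qed
  show "inv f x = x" if "x < 0" for x
    using Cup_homeo_inv_f[of x] by (simp add: Cup_homeo_neg[OF that])
  show "inv f 0 = 0"
    using Cup_homeo_inv_f[of 0] by (simp add: Cup_homeo_0)
  show "filterlim (inv f) at_top at_top"
    unfolding filterlim_at_top eventually_at_top_linorder
  proof
    fix Z
    have "Z \<le> inv f y" if "f Z \<le> y" for y
      using that Cup_homeo_le_iff[of Z "inv f y"] by (simp add: Cup_homeo_f_inv)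
    then show "\<exists>N. \<forall>y\<ge>N. Z \<le> inv f y"
      by blast
  qed
qed

lemma Cup_homeo_in_Cup: "f \<in> Cup"
  using f unfolding Cup_def Cset_def Cup_homeo_def
  by (auto intro: continuous_on_subset mono_onI strict_mono_onI
      simp: Cup_homeo_le_iff Cup_homeo_less_iff Cup_homeo_nonneg_iff)

lemma Cup_homeo_extup: "extup f = f"
  by (auto simp: extup_def Cup_homeo_neg)

lemma Cup_homeo_in_Cupq: "Ck q f \<Longrightarrow> f \<in> Cupq q"
  by (simp add: Cupq_def Cup_homeo_in_Cup Cup_homeo_extup)

end

lemma Cup_homeoI:
  assumes "f \<in> Cup" and "continuous_on UNIV f" and "\<And>x. x < 0 \<Longrightarrow> f x = x"
  shows "Cup_homeo f"
  unfolding Cup_homeo_def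
proof (intro conjI allI impI)
  have smono: "strict_mono_on {0..} f" and nonneg: "\<And>u. 0 \<le> u \<Longrightarrow> 0 \<le> f u"
    using assms(1) by (auto simp: Cup_def Cset_def)
  show "strict_mono f"
  proof (rule strict_monoI)
    fix x y :: real
    assume "x < y"
    then show "f x < f y"
      using strict_mono_onD[OF smono, of x y] nonneg[of y] assms(3)
      by (cases "x < 0"; cases "y < 0") auto
  qed
qed (use assms in \<open>auto simp: Cup_def Cset_def\<close>)

lemma Cup_homeo_ident: "Cup_homeo (\<lambda>x. x)"
  by (simp add: Cup_homeo_def strict_mono_def filterlim_ident)

lemma Cup_homeo_compose:
  assumes f: "Cup_homeo f" and g: "Cup_homeo g"
  shows "Cup_homeo (\<lambda>x. f (g x))"
  unfolding Cup_homeo_def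
proof (intro conjI allI impI)
  show "continuous_on UNIV (\<lambda>x. f (g x))"
    using f g unfolding Cup_homeo_def by (auto intro: continuous_on_compose2[of UNIV f UNIV g])
  show "strict_mono (\<lambda>x. f (g x))"
    by (simp add: strict_mono_def Cup_homeo_less_iff[OF f] Cup_homeo_less_iff[OF g])
  show "f (g x) = x" if "x < 0" for x
    using that by (simp add: Cup_homeo_neg[OF f] Cup_homeo_neg[OF g])
  show "f (g 0) = 0"
    by (simp add: Cup_homeo_0[OF f] Cup_homeo_0[OF g])
  show "filterlim (\<lambda>x. f (g x)) at_top at_top"
    using f g unfolding Cup_homeo_def by (auto intro: filterlim_compose)
qed

lemma Cup_homeo_add_mono:
  assumes f: "Cup_homeo f" and "mono s" and "\<And>x. x \<le> 0 \<Longrightarrow> s x = 0"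
    and "continuous_on UNIV (\<lambda>x. f x + s x)"
  shows "Cup_homeo (\<lambda>x. f x + s x)"
  unfolding Cup_homeo_def
proof (intro conjI allI impI)
  have s_nonneg: "0 \<le> s x" for x
    using assms(2,3) by (metis monoD nle_le order.refl)
  show "strict_mono (\<lambda>x. f x + s x)"
    using \<open>mono s\<close> by (intro strict_monoI add_less_le_mono) (auto simp: Cup_homeo_less_iff[OF f] monoD)
  show "f x + s x = x" if "x < 0" for x
    using that assms(3) by (simp add: Cup_homeo_neg[OF f])
  show "f 0 + s 0 = 0"
    using assms(3) by (simp add: Cup_homeo_0[OF f])
  show "filterlim (\<lambda>x. f x + s x) at_top at_top"
    using f s_nonneg unfolding Cup_homeo_def
    by (auto intro: filterlim_at_top_mono always_eventually)
qed fact

section \<open>The sets D^q and barD^q\<close>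

definition Cq_canon :: "nat \<Rightarrow> (real \<Rightarrow> real) \<Rightarrow> bool" where
  "Cq_canon q g \<longleftrightarrow> mono g \<and> (\<forall>u\<le>0. g u = 0) \<and> Ck q g"

lemma Cq_canon_iff: "Cq_canon q g \<longleftrightarrow> g \<in> Cq q \<and> (\<forall>u<0. g u = 0)"
proof
  assume g: "Cq_canon q g"
  then have "ext0 g = g" and "\<And>u. 0 \<le> g u"
    unfolding Cq_canon_def ext0_def by (auto, metis monoD nle_le)
  then show "g \<in> Cq q \<and> (\<forall>u<0. g u = 0)"
    using g Ck_imp_continuous_on[of q g] unfolding Cq_canon_def Cq_def Cset_def
    by (auto intro: continuous_on_subset mono_onI monoD)
next
  assume g: "g \<in> Cq q \<and> (\<forall>u<0. g u = 0)"
  then have mono_on: "mono_on {0..} g" and nonneg: "\<And>u. 0 \<le> u \<Longrightarrow> 0 \<le> g u"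
    and "g 0 = 0" and "ext0 g = g"
    by (auto simp: Cq_def Cset_def ext0_def)
  have "mono g"
  proof (rule monoI)
    fix x y :: real
    assume "x \<le> y"
    then show "g x \<le> g y"
      using g nonneg mono_onD[OF mono_on, of x y] by (cases "x < 0"; cases "y < 0") auto
  qed
  then show "Cq_canon q g"
    using g \<open>g 0 = 0\<close> \<open>ext0 g = g\<close> by (auto simp: Cq_canon_def Cq_def le_less)
qed

lemma Cq_canon_deriv_nonneg:
  assumes "Cq_canon q g" and "1 \<le> q"
  shows "0 \<le> deriv g u"
proof -
  have "mono_on {u..} g"
    using assms(1) by (intro mono_onI) (simp add: Cq_canon_def monoD)
  moreover have "(g has_real_derivative deriv g u) (at u)"
    using assms by (intro Ck_imp_DERIV) (simp_all add: Cq_canon_def)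
  ultimately show ?thesis
    by (rule has_real_derivative_nonneg_if_mono_on)
qed

lemma Cq_canon_compose:
  assumes g: "Cq_canon q g" and K: "Cup_homeo K" "Ck q K"
  shows "Cq_canon q (\<lambda>x. g (K x))"
  unfolding Cq_canon_def
proof (intro conjI allI impI)
  show "mono (\<lambda>x. g (K x))"
    using g by (auto simp: Cq_canon_def mono_def Cup_homeo_le_iff[OF K(1)])
  show "g (K u) = 0" if "u \<le> 0" for u
    using g that Cup_homeo_le_iff[OF K(1), of u 0] by (simp add: Cq_canon_def Cup_homeo_0[OF K(1)])
  show "Ck q (\<lambda>x. g (K x))"
    using g by (intro Ck_compose[OF _ K(2)]) (simp add: Cq_canon_def)
qed

text \<open>The supremum in the definitions of D (with f = phi_i) and of barD (with f the identity).\<close>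
definition lip_wrt :: "(real \<Rightarrow> real) \<Rightarrow> (real \<Rightarrow> real) \<Rightarrow> ereal" where
  "lip_wrt g f = (SUP p\<in>{(u1, u2). 0 \<le> u1 \<and> 0 \<le> u2 \<and> u1 \<noteq> u2}.
     ereal ((g (fst p) - g (snd p)) / (f (fst p) - f (snd p))))"

lemma lip_wrt_nonneg:
  assumes "mono g" and "strict_mono f"
  shows "0 \<le> lip_wrt g f"
proof -
  have "0 \<le> (g 1 - g 0) / (f 1 - f (0::real))"
    using monoD[OF assms(1), of 0 1] strict_monoD[OF assms(2), of 0 1] by simp
  then show ?thesis
    unfolding lip_wrt_def by (intro SUP_upper2[of "(1, 0)"]) auto
qed

lemma lip_wrt_increment_le:
  assumes "lip_wrt g f \<le> ereal L" and "strict_mono f" and "0 \<le> y" and "y \<le> z"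
  shows "g z - g y \<le> L * (f z - f y)"
proof (cases "y = z")
  case False
  then have "ereal ((g z - g y) / (f z - f y)) \<le> lip_wrt g f"
    using assms(3,4) unfolding lip_wrt_def by (intro SUP_upper2[of "(z, y)"]) auto
  then have "(g z - g y) / (f z - f y) \<le> L"
    using assms(1) by (meson order.trans ereal_less_eq(3))
  moreover have "0 < f z - f y"
    using False assms(2,4) by (simp add: strict_mono_less)
  ultimately show ?thesis
    by (simp add: pos_divide_le_eq mult.commute)
qed simp

lemma lip_wrt_compose_Cup_homeo:
  assumes K: "Cup_homeo K"
  shows "lip_wrt (\<lambda>u. g (K u)) K = lip_wrt g (\<lambda>z. z)"
proof -
  let ?P = "{(u1, u2). 0 \<le> u1 \<and> 0 \<le> u2 \<and> u1 \<noteq> u2} :: (real \<times> real) set"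
  have "map_prod K K ` ?P = ?P"
  proof (intro equalityI subsetI)
    fix p
    assume "p \<in> map_prod K K ` ?P"
    then show "p \<in> ?P"
      by (auto simp: Cup_homeo_nonneg_iff[OF K] inj_eq[OF Cup_homeo_inj[OF K]])
  next
    fix p
    assume p: "p \<in> ?P"
    then have "map_prod (inv K) (inv K) p \<in> ?P"
      using Cup_homeo_inv[OF K]
      by (auto simp: Cup_homeo_nonneg_iff inj_eq[OF Cup_homeo_inj[OF Cup_homeo_inv[OF K]]])
    moreover have "p = map_prod K K (map_prod (inv K) (inv K) p)"
      by (simp add: map_prod_def Cup_homeo_f_inv[OF K] split: prod.split)
    ultimately show "p \<in> map_prod K K ` ?P"
      by (rule rev_image_eqI)
  qed
  then have "lip_wrt g (\<lambda>z. z) = (SUP p\<in>map_prod K K ` ?P. ereal ((g (fst p) - g (snd p)) / (fst p - snd p)))"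
    by (simp add: lip_wrt_def)
  also have "\<dots> = lip_wrt (\<lambda>u. g (K u)) K"
    by (simp add: lip_wrt_def image_image)
  finally show ?thesis ..
qed

lemma ereal_weighted_sum_less_finite:
  fixes R :: "'a \<Rightarrow> ereal"
  assumes "finite A" and R_nonneg: "\<And>i. i \<in> A \<Longrightarrow> 0 \<le> R i" and c_pos: "\<And>i. i \<in> A \<Longrightarrow> 0 < c i"
    and less: "(\<Sum>i\<in>A. ereal (c i) * R i) < ereal t"
  obtains L where "\<And>i. i \<in> A \<Longrightarrow> R i = ereal (L i)" and "(\<Sum>i\<in>A. c i * L i) < t"
proof
  have "R i \<noteq> \<infinity>" if "i \<in> A" for i
  proof
    assume "R i = \<infinity>"
    then have "(\<Sum>i\<in>A. ereal (c i) * R i) = \<infinity>"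
      using \<open>finite A\<close> that c_pos[OF that] by (subst sum_Pinfty) auto
    with less show False
      by simp
  qed
  then show R_eq: "R i = ereal (real_of_ereal (R i))" if "i \<in> A" for i
    using that R_nonneg[OF that] by (cases "R i") auto
  have "ereal (c i) * R i = ereal (c i * real_of_ereal (R i))" if "i \<in> A" for i
    using R_eq[OF that] by (metis times_ereal.simps(1))
  then have "(\<Sum>i\<in>A. ereal (c i) * R i) = (\<Sum>i\<in>A. ereal (c i * real_of_ereal (R i)))"
    by (rule sum.cong[OF refl])
  with less show "(\<Sum>i\<in>A. c i * real_of_ereal (R i)) < t"
    by simp
qed

lemma Dq_iff:
  "\<psi> \<in> Dq I q \<longleftrightarrow> (\<forall>i. i \<notin> {1..I} \<longrightarrow> \<psi> i = (\<lambda>_. 0)) \<and> (\<forall>i\<in>{1..I}. Cq_canon q (\<psi> i))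
     \<and> phi I \<psi> I \<in> Cup \<and> (\<Sum>i=1..I. ereal (real i) * lip_wrt (\<psi> i) (phi I \<psi> i)) < ereal (1/2)"
  unfolding Dq_def Dset_def canon_def lip_wrt_def Cq_canon_iff by (auto simp: Cq_def)

lemma barDq_iff:
  "b \<in> barDq I q \<longleftrightarrow> (\<forall>i. i \<notin> {1..I} \<longrightarrow> b i = (\<lambda>_. 0)) \<and> (\<forall>i\<in>{1..I}. Cq_canon q (b i))
     \<and> (\<Sum>i=1..I. ereal (real i) * lip_wrt (b i) (\<lambda>z. z)) < ereal (1/2)"
  unfolding barDq_def barDset_def canon_def lip_wrt_def Cq_canon_iff by (auto simp: Cq_def)

lemma Dq_component: "\<psi> \<in> Dq I q \<Longrightarrow> j \<in> {1..I} \<Longrightarrow> Cq_canon q (\<psi> j)"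
  by (simp add: Dq_iff)

lemma barDq_component: "b \<in> barDq I q \<Longrightarrow> j \<in> {1..I} \<Longrightarrow> Cq_canon q (b j)"
  by (simp add: barDq_iff)

section \<open>The maps phi_i\<close>

lemma sum_weights_diff_min:
  fixes c :: "nat \<Rightarrow> real"
  assumes "i \<le> I"
  shows "(\<Sum>j=1..I. 2 * real j * c j) - (\<Sum>j=1..I. 2 * real (min i j) * c j)
       = (\<Sum>j\<in>{i<..I}. 2 * real (j - i) * c j)"
proof -
  have "(\<Sum>j=1..I. 2 * real j * c j) - (\<Sum>j=1..I. 2 * real (min i j) * c j)
      = (\<Sum>j=1..I. 2 * (real j - real (min i j)) * c j)"
    by (simp add: sum_subtractf[symmetric] algebra_simps)
  also have "\<dots> = (\<Sum>j\<in>{1..i} \<union> {i<..I}. 2 * (real j - real (min i j)) * c j)"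
    using assms by (intro sum.cong) auto
  also have "\<dots> = (\<Sum>j\<in>{i<..I}. 2 * (real j - real (min i j)) * c j)"
    by (subst sum.union_disjoint) auto
  also have "\<dots> = (\<Sum>j\<in>{i<..I}. 2 * real (j - i) * c j)"
    by (intro sum.cong) (auto simp: of_nat_diff)
  finally show ?thesis .
qed

lemma phi_0: "phi I \<psi> 0 = (\<lambda>u. u)"
  by (simp add: fun_eq_iff phi_def)

lemma phi_eq_phi_top_plus:
  assumes "i \<le> I"
  shows "phi I \<psi> i u = phi I \<psi> I u + (\<Sum>j\<in>{i<..I}. 2 * real (j - i) * \<psi> j u)"
  using sum_weights_diff_min[OF assms, of "\<lambda>j. \<psi> j u"] unfolding phi_def
  by (simp add: min_absorb2)

lemma phi_Ck: "(\<And>j. j \<in> {1..I} \<Longrightarrow> Ck q (\<psi> j)) \<Longrightarrow> Ck q (phi I \<psi> i)"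
  unfolding phi_def[abs_def] by (rule Ck_diff[OF Ck_ident Ck_sum]) (auto intro: Ck_cmult)

lemma Dq_phi_Ck: "\<psi> \<in> Dq I q \<Longrightarrow> Ck q (phi I \<psi> i)"
  by (intro phi_Ck) (simp add: Dq_component[unfolded Cq_canon_def])

lemma phi_has_real_derivative:
  assumes "\<And>j. j \<in> {1..I} \<Longrightarrow> Ck q (\<psi> j)" and "1 \<le> q"
  shows "(phi I \<psi> i has_real_derivative 1 - (\<Sum>j=1..I. 2 * real (min i j) * deriv (\<psi> j) u)) (at u)"
  unfolding phi_def[abs_def]
  by (intro DERIV_diff DERIV_ident DERIV_sum DERIV_cmult Ck_imp_DERIV[OF assms(1) assms(2)]) auto

lemma phi_Cup_homeo:
  assumes \<psi>: "\<psi> \<in> Dq I q" and "i \<le> I"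
  shows "Cup_homeo (phi I \<psi> i)"
proof -
  have canon: "\<And>j. j \<in> {1..I} \<Longrightarrow> Cq_canon q (\<psi> j)"
    by (rule Dq_component[OF \<psi>])
  have top: "Cup_homeo (phi I \<psi> I)"
  proof (rule Cup_homeoI[OF _ Ck_imp_continuous_on[OF Dq_phi_Ck[OF \<psi>]]])
    show "phi I \<psi> I \<in> Cup"
      using \<psi> by (simp add: Dq_iff)
    show "phi I \<psi> I x = x" if "x < 0" for x
      using canon that by (simp add: phi_def Cq_canon_def)
  qed
  define s where "s u = (\<Sum>j\<in>{i<..I}. 2 * real (j - i) * \<psi> j u)" for u
  have phi_eq: "phi I \<psi> i = (\<lambda>u. phi I \<psi> I u + s u)"
    using phi_eq_phi_top_plus[OF assms(2)] by (auto simp: s_def)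
  have "mono s"
    using canon unfolding s_def
    by (intro monoI sum_mono mult_left_mono) (auto simp: Cq_canon_def monoD)
  moreover have "s u = 0" if "u \<le> 0" for u
    using canon that by (auto simp: s_def Cq_canon_def)
  moreover have "continuous_on UNIV (\<lambda>u. phi I \<psi> I u + s u)"
    using Ck_imp_continuous_on[OF Dq_phi_Ck[OF \<psi>, of i]] by (simp add: phi_eq)
  ultimately have "Cup_homeo (\<lambda>u. phi I \<psi> I u + s u)"
    by (rule Cup_homeo_add_mono[OF top])
  then show ?thesis
    by (simp add: phi_eq)
qed

lemma deriv_phi:
  assumes "\<psi> \<in> Dq I q" and "1 \<le> q"
  shows "deriv (phi I \<psi> i) u = 1 - (\<Sum>j=1..I. 2 * real (min i j) * deriv (\<psi> j) u)"
  using Dq_component[OF assms(1)] assms(2)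
  by (intro DERIV_imp_deriv phi_has_real_derivative) (simp_all add: Cq_canon_def)

lemma deriv_phi_le_1:
  assumes "\<psi> \<in> Dq I q" and "1 \<le> q"
  shows "deriv (phi I \<psi> i) u \<le> 1"
proof -
  have "0 \<le> (\<Sum>j=1..I. 2 * real (min i j) * deriv (\<psi> j) u)"
    using Dq_component[OF assms(1)] assms(2)
    by (intro sum_nonneg mult_nonneg_nonneg Cq_canon_deriv_nonneg) auto
  then show ?thesis
    by (simp add: deriv_phi[OF assms])
qed

lemma deriv_component_le_lip_wrt:
  assumes \<psi>: "\<psi> \<in> Dq I q" and "1 \<le> q" and j: "j \<in> {1..I}"
    and L: "lip_wrt (\<psi> j) (phi I \<psi> j) = ereal L"
  shows "deriv (\<psi> j) u \<le> L"
proof -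
  have canon: "Cq_canon q (\<psi> j)"
    by (rule Dq_component[OF \<psi> j])
  have homeo: "Cup_homeo (phi I \<psi> j)"
    using j by (intro phi_Cup_homeo[OF \<psi>]) simp
  then have strict_mono: "strict_mono (phi I \<psi> j)"
    by (simp add: Cup_homeo_def)
  have "0 \<le> L"
    using lip_wrt_nonneg[OF _ strict_mono, of "\<psi> j"] canon L by (simp add: Cq_canon_def)
  show ?thesis
  proof (cases "u < 0")
    case True
    then have "deriv (\<psi> j) u = 0"
      using canon by (intro DERIV_imp_deriv has_real_derivative_vanishing_neg) (simp_all add: Cq_canon_def)
    then show ?thesis
      using \<open>0 \<le> L\<close> by simp
  next
    case False
    have "(phi I \<psi> j has_real_derivative deriv (phi I \<psi> j) u) (at u)"
      by (rule Ck_imp_DERIV[OF Dq_phi_Ck[OF \<psi>] \<open>1 \<le> q\<close>])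
    moreover have "(\<psi> j has_real_derivative deriv (\<psi> j) u) (at u)"
      using canon \<open>1 \<le> q\<close> by (intro Ck_imp_DERIV) (simp_all add: Cq_canon_def)
    moreover have "\<psi> j z - \<psi> j y \<le> L * (phi I \<psi> j z - phi I \<psi> j y)" if "u \<le> y" "y \<le> z" for y z
      using False that by (intro lip_wrt_increment_le[OF _ strict_mono]) (simp_all add: L)
    ultimately have "deriv (\<psi> j) u \<le> L * deriv (phi I \<psi> j) u"
      by (rule has_real_derivative_le_if_increment_le)
    also have "\<dots> \<le> L"
      using deriv_phi_le_1[OF \<psi> \<open>1 \<le> q\<close>] \<open>0 \<le> L\<close> by (simp add: mult_left_le)
    finally show ?thesis .
  qed
qed

lemma deriv_phi_pos:
  assumes \<psi>: "\<psi> \<in> Dq I q" and "1 \<le> q"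
  shows "0 < deriv (phi I \<psi> i) u"
proof -
  have nonneg: "0 \<le> lip_wrt (\<psi> j) (phi I \<psi> j)" if "j \<in> {1..I}" for j
    using Dq_component[OF \<psi> that] phi_Cup_homeo[OF \<psi>, of j] that
    by (intro lip_wrt_nonneg) (simp_all add: Cq_canon_def Cup_homeo_def)
  have less: "(\<Sum>j=1..I. ereal (real j) * lip_wrt (\<psi> j) (phi I \<psi> j)) < ereal (1 / 2)"
    using \<psi> by (simp add: Dq_iff)
  obtain L where L: "\<And>j. j \<in> {1..I} \<Longrightarrow> lip_wrt (\<psi> j) (phi I \<psi> j) = ereal (L j)"
    and sum_L: "(\<Sum>j=1..I. real j * L j) < 1 / 2"
    by (rule ereal_weighted_sum_less_finite[OF finite_atLeastAtMost nonneg _ less]) auto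
  have "(\<Sum>j=1..I. 2 * real (min i j) * deriv (\<psi> j) u) \<le> (\<Sum>j=1..I. 2 * (real j * L j))"
  proof (rule sum_mono)
    fix j
    assume j: "j \<in> {1..I}"
    have "real (min i j) * deriv (\<psi> j) u \<le> real j * L j"
      using deriv_component_le_lip_wrt[OF \<psi> \<open>1 \<le> q\<close> j L[OF j]]
        Cq_canon_deriv_nonneg[OF Dq_component[OF \<psi> j] \<open>1 \<le> q\<close>]
      by (intro mult_mono) auto
    then show "2 * real (min i j) * deriv (\<psi> j) u \<le> 2 * (real j * L j)"
      by simp
  qed
  also have "\<dots> < 1"
    using sum_L by (simp add: sum_distrib_left[symmetric])
  finally show ?thesis
    by (simp add: deriv_phi[OF assms])
qed

section \<open>The maps gamma_i\<close>

declare gam.simps [simp del]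

lemma gam_eq: "gam I b i z = z + (\<Sum>j\<in>{i<..I}. 2 * real (j - i) * b j (gam I b j z))"
  by (subst gam.simps) auto

lemma gam_phi_top:
  assumes "i \<le> I" and "\<And>j. j \<in> {i<..I} \<Longrightarrow> b j (phi I \<psi> j u) = \<psi> j u"
  shows "gam I b i (phi I \<psi> I u) = phi I \<psi> i u"
  using assms
proof (induction "I - i" arbitrary: i rule: less_induct)
  case less
  have "gam I b j (phi I \<psi> I u) = phi I \<psi> j u" if "j \<in> {i<..I}" for j
    using that less by (intro less.hyps) auto
  then have "gam I b i (phi I \<psi> I u) = phi I \<psi> I u + (\<Sum>j\<in>{i<..I}. 2 * real (j - i) * \<psi> j u)"
    using less.prems(2) by (simp add: gam_eq[of I b i])
  then show ?case
    using phi_eq_phi_top_plus[OF less.prems(1)] by simp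
qed

lemma gam_0_minus:
  assumes "i \<le> I"
  shows "gam I b 0 z - (\<Sum>j=1..I. 2 * real (min i j) * b j (gam I b j z)) = gam I b i z"
proof -
  have "{0<..I} = {1..I}"
    by auto
  then show ?thesis
    using sum_weights_diff_min[OF assms, of "\<lambda>j. b j (gam I b j z)"]
    by (simp add: gam_eq[of I b 0] gam_eq[of I b i])
qed

lemma gam_minus_ident_mono:
  assumes "\<And>j. j \<in> {i<..I} \<Longrightarrow> mono (b j)" and "\<And>j. j \<in> {i<..I} \<Longrightarrow> mono (gam I b j)"
  shows "mono (\<lambda>z. gam I b i z - z)"
proof (rule monoI)
  fix x y :: real
  assume "x \<le> y"
  then have "b j (gam I b j x) \<le> b j (gam I b j y)" if "j \<in> {i<..I}" for j
    using assms that by (simp add: monoD)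
  then have "(\<Sum>j\<in>{i<..I}. 2 * real (j - i) * b j (gam I b j x))
      \<le> (\<Sum>j\<in>{i<..I}. 2 * real (j - i) * b j (gam I b j y))"
    by (intro sum_mono mult_left_mono) auto
  then show "gam I b i x - x \<le> gam I b i y - y"
    by (simp add: gam_eq[of I b i])
qed

lemma gam_Cup_homeo_Ck:
  assumes canon: "\<And>j. j \<in> {1..I} \<Longrightarrow> Cq_canon q (b j)"
  shows "Cup_homeo (gam I b i) \<and> Ck q (gam I b i)"
proof (induction "I - i" arbitrary: i rule: less_induct)
  case less
  have IH: "Cup_homeo (gam I b j) \<and> Ck q (gam I b j)" if "j \<in> {i<..I}" for j
    using that by (intro less.hyps) auto
  have canon': "Cq_canon q (b j)" if "j \<in> {i<..I}" for j
    using that by (intro canon) auto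
  define s where "s z = (\<Sum>j\<in>{i<..I}. 2 * real (j - i) * b j (gam I b j z))" for z
  have gam_eq_s: "gam I b i = (\<lambda>z. z + s z)"
    by (intro ext) (simp add: s_def gam_eq[of I b i])
  have "Ck q s"
    unfolding s_def[abs_def]
    by (rule Ck_sum, simp, rule Ck_cmult, rule Ck_compose) (use IH canon' in \<open>auto simp: Cq_canon_def\<close>)
  then have "Ck q (gam I b i)"
    unfolding gam_eq_s by (rule Ck_add[OF Ck_ident])
  have "mono (\<lambda>z. gam I b i z - z)"
    using IH canon' by (intro gam_minus_ident_mono) (auto simp: Cq_canon_def Cup_homeo_def strict_mono_mono)
  then have "mono s"
    by (simp add: gam_eq_s)
  moreover have "s z = 0" if "z \<le> 0" for z
  proof -
    have "b j (gam I b j z) = 0" if "j \<in> {i<..I}" for j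
      using IH[OF that] canon'[OF that] \<open>z \<le> 0\<close> Cup_homeo_le_iff[of "gam I b j" z 0]
      by (simp add: Cq_canon_def Cup_homeo_0)
    then show ?thesis
      by (simp add: s_def)
  qed
  moreover have "continuous_on UNIV (\<lambda>z. z + s z)"
    using Ck_imp_continuous_on[OF \<open>Ck q (gam I b i)\<close>] by (simp add: gam_eq_s)
  ultimately have "Cup_homeo (\<lambda>z. z + s z)"
    by (rule Cup_homeo_add_mono[OF Cup_homeo_ident])
  then show ?case
    using \<open>Ck q (gam I b i)\<close> by (simp add: gam_eq_s)
qed

lemma deriv_gam_ge_1:
  assumes canon: "\<And>j. j \<in> {1..I} \<Longrightarrow> Cq_canon q (b j)" and "1 \<le> q"
  shows "1 \<le> deriv (gam I b i) z"
proof -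
  have "mono (\<lambda>z. gam I b i z - z)"
    using gam_Cup_homeo_Ck[OF canon] canon
    by (intro gam_minus_ident_mono) (auto simp: Cq_canon_def Cup_homeo_def strict_mono_mono)
  then have "mono_on {z..} (\<lambda>z. gam I b i z - z)"
    by (simp add: mono_imp_mono_on)
  moreover have "((\<lambda>z. gam I b i z - z) has_real_derivative deriv (gam I b i) z - 1) (at z)"
    using gam_Cup_homeo_Ck[OF canon] \<open>1 \<le> q\<close> by (intro DERIV_diff Ck_imp_DERIV[of q] DERIV_ident) auto
  ultimately show ?thesis
    using has_real_derivative_nonneg_if_mono_on by fastforce
qed

lemma barDq_gam_Cup_homeo_Ck: "b \<in> barDq I q \<Longrightarrow> Cup_homeo (gam I b i) \<and> Ck q (gam I b i)"
  by (rule gam_Cup_homeo_Ck) (simp add: barDq_iff)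

lemma barDq_deriv_gam_ge_1: "b \<in> barDq I q \<Longrightarrow> 1 \<le> q \<Longrightarrow> 1 \<le> deriv (gam I b i) z"
  by (rule deriv_gam_ge_1) (simp_all add: barDq_iff)

section \<open>The bijection Upsilon\<close>

lemma Ups_eq:
  assumes \<psi>: "\<psi> \<in> Dq I q" and i: "i \<in> {1..I}"
  shows "Ups I \<psi> i = (\<lambda>z. \<psi> i (inv (phi I \<psi> i) z))"
proof
  fix z :: real
  have homeo: "Cup_homeo (phi I \<psi> i)"
    using i by (intro phi_Cup_homeo[OF \<psi>]) simp
  show "Ups I \<psi> i z = \<psi> i (inv (phi I \<psi> i) z)"
  proof (cases "0 \<le> z")
    case True
    then show ?thesis
      using i by (simp add: Ups_def Cup_homeo_the_inv_into[OF homeo])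
  next
    case False
    then show ?thesis
      using Dq_component[OF \<psi> i] Cup_homeo_neg[OF Cup_homeo_inv[OF homeo]]
      by (simp add: Ups_def Cq_canon_def)
  qed
qed

lemma Ups_phi:
  assumes "\<psi> \<in> Dq I q" and "i \<in> {1..I}"
  shows "Ups I \<psi> i (phi I \<psi> i u) = \<psi> i u"
  using assms phi_Cup_homeo[OF assms(1), of i] by (simp add: Ups_eq Cup_homeo_inv_f)

lemma Ups_in_barDq:
  assumes \<psi>: "\<psi> \<in> Dq I q" and "1 \<le> q"
  shows "Ups I \<psi> \<in> barDq I q"
  unfolding barDq_iff
proof (intro conjI allI impI ballI)
  fix i
  assume "i \<notin> {1..I}"
  then show "Ups I \<psi> i = (\<lambda>_. 0)"
    by (auto simp: Ups_def)
next
  fix i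
  assume i: "i \<in> {1..I}"
  have homeo: "Cup_homeo (phi I \<psi> i)"
    using i by (intro phi_Cup_homeo[OF \<psi>]) simp
  have "Ck q (inv (phi I \<psi> i))"
    using Dq_phi_Ck[OF \<psi>] \<open>1 \<le> q\<close> deriv_phi_pos[OF \<psi> \<open>1 \<le> q\<close>] Cup_homeo_bij[OF homeo]
    by (intro Ck_inv) (auto simp: less_imp_neq[symmetric])
  then show "Cq_canon q (Ups I \<psi> i)"
    unfolding Ups_eq[OF \<psi> i]
    by (rule Cq_canon_compose[OF Dq_component[OF \<psi> i] Cup_homeo_inv[OF homeo]])
next
  have "lip_wrt (Ups I \<psi> i) (\<lambda>z. z) = lip_wrt (\<psi> i) (phi I \<psi> i)" if i: "i \<in> {1..I}" for i
    using lip_wrt_compose_Cup_homeo[OF phi_Cup_homeo[OF \<psi>], of i "Ups I \<psi> i"] i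
    by (simp add: Ups_phi[OF \<psi> i])
  then show "(\<Sum>i=1..I. ereal (real i) * lip_wrt (Ups I \<psi> i) (\<lambda>z. z)) < ereal (1 / 2)"
    using \<psi> by (simp add: Dq_iff)
qed

text \<open>If b = Ups psi, then gam_i o phi_I = phi_i by gam_phi_top; as phi_0 is the identity, phi_I
  is the inverse of gam_0, so psi_i = b_i o phi_i is recovered from b as follows.\<close>
definition Ups_inv :: "nat \<Rightarrow> (nat \<Rightarrow> real \<Rightarrow> real) \<Rightarrow> nat \<Rightarrow> real \<Rightarrow> real" where
  "Ups_inv I b i = (if i \<in> {1..I} then (\<lambda>u. b i (gam I b i (inv (gam I b 0) u))) else (\<lambda>_. 0))"

lemma Ups_inv_Ups:
  assumes \<psi>: "\<psi> \<in> Dq I q" and "1 \<le> q"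
  shows "Ups_inv I (Ups I \<psi>) = \<psi>"
proof (intro ext)
  fix i u
  let ?b = "Ups I \<psi>"
  have gam_phi: "gam I ?b i (phi I \<psi> I u) = phi I \<psi> i u" if "i \<le> I" for i
    using that Ups_phi[OF \<psi>] by (intro gam_phi_top) auto
  have "Cup_homeo (gam I ?b 0)"
    using barDq_gam_Cup_homeo_Ck[OF Ups_in_barDq[OF \<psi> \<open>1 \<le> q\<close>]] by blast
  then have "inv (gam I ?b 0) u = phi I \<psi> I u"
    using gam_phi[of 0] Cup_homeo_inv_f by (metis le0 phi_0)
  then show "Ups_inv I ?b i u = \<psi> i u"
    using \<psi> gam_phi[of i] by (auto simp: Ups_inv_def Ups_phi Dq_iff)
qed

lemma Ups_inv_gam_Cup_homeo_Ck:
  assumes b: "b \<in> barDq I q" and "1 \<le> q"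
  shows "Cup_homeo (\<lambda>u. gam I b i (inv (gam I b 0) u)) \<and> Ck q (\<lambda>u. gam I b i (inv (gam I b 0) u))"
proof -
  have homeo_Ck: "Cup_homeo (gam I b k) \<and> Ck q (gam I b k)" for k
    by (rule barDq_gam_Cup_homeo_Ck[OF b])
  have "deriv (gam I b 0) x \<noteq> 0" for x
    using barDq_deriv_gam_ge_1[OF b \<open>1 \<le> q\<close>, of 0 x] by (metis not_one_le_zero)
  then have "Ck q (inv (gam I b 0))"
    using homeo_Ck \<open>1 \<le> q\<close> by (intro Ck_inv) (auto simp: Cup_homeo_bij)
  then show ?thesis
    using homeo_Ck Cup_homeo_inv Cup_homeo_compose Ck_compose[of q "gam I b i"] by blast
qed

lemma phi_Ups_inv:
  assumes b: "b \<in> barDq I q" and "i \<le> I"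
  shows "phi I (Ups_inv I b) i = (\<lambda>u. gam I b i (inv (gam I b 0) u))"
proof
  fix u
  define z where "z = inv (gam I b 0) u"
  have u_eq: "gam I b 0 z = u"
    using barDq_gam_Cup_homeo_Ck[OF b] by (simp add: z_def Cup_homeo_f_inv)
  have "(\<Sum>j=1..I. 2 * real (min i j) * Ups_inv I b j u) = (\<Sum>j=1..I. 2 * real (min i j) * b j (gam I b j z))"
    by (intro sum.cong) (auto simp: Ups_inv_def z_def)
  then have "phi I (Ups_inv I b) i u = gam I b 0 z - (\<Sum>j=1..I. 2 * real (min i j) * b j (gam I b j z))"
    by (simp add: phi_def u_eq)
  then show "phi I (Ups_inv I b) i u = gam I b i (inv (gam I b 0) u)"
    using gam_0_minus[OF assms(2), of b z] by (simp flip: z_def)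
qed

lemma Ups_inv_in_Dq:
  assumes b: "b \<in> barDq I q" and "1 \<le> q"
  shows "Ups_inv I b \<in> Dq I q"
  unfolding Dq_iff
proof (intro conjI allI impI ballI)
  fix i
  assume "i \<notin> {1..I}"
  then show "Ups_inv I b i = (\<lambda>_. 0)"
    by (auto simp: Ups_inv_def)
next
  fix i
  assume "i \<in> {1..I}"
  then show "Cq_canon q (Ups_inv I b i)"
    using Ups_inv_gam_Cup_homeo_Ck[OF b \<open>1 \<le> q\<close>, of i]
    by (simp add: Ups_inv_def Cq_canon_compose[OF barDq_component[OF b]])
next
  show "phi I (Ups_inv I b) I \<in> Cup"
    using Ups_inv_gam_Cup_homeo_Ck[OF b \<open>1 \<le> q\<close>, of I]
    by (simp add: phi_Ups_inv[OF b] Cup_homeo_in_Cup)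
next
  have "lip_wrt (Ups_inv I b i) (phi I (Ups_inv I b) i) = lip_wrt (b i) (\<lambda>z. z)" if "i \<in> {1..I}" for i
    using that lip_wrt_compose_Cup_homeo[OF conjunct1[OF Ups_inv_gam_Cup_homeo_Ck[OF b \<open>1 \<le> q\<close>]]]
    by (simp add: phi_Ups_inv[OF b] Ups_inv_def)
  then show "(\<Sum>i=1..I. ereal (real i) * lip_wrt (Ups_inv I b i) (phi I (Ups_inv I b) i)) < ereal (1 / 2)"
    using b by (simp add: barDq_iff)
qed

lemma Ups_Ups_inv:
  assumes b: "b \<in> barDq I q" and "1 \<le> q"
  shows "Ups I (Ups_inv I b) = b"
proof (intro ext)
  fix i z
  show "Ups I (Ups_inv I b) i z = b i z"
  proof (cases "i \<in> {1..I}")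
    case True
    then show ?thesis
      using Cup_homeo_f_inv[OF conjunct1[OF Ups_inv_gam_Cup_homeo_Ck[OF b \<open>1 \<le> q\<close>]], of i z]
      by (simp add: Ups_eq[OF Ups_inv_in_Dq[OF assms] True] phi_Ups_inv[OF b] Ups_inv_def)
  next
    case False
    then show ?thesis
      using b by (auto simp: Ups_def barDq_iff)
  qed
qed

theorem lemma6p2:
  fixes I q :: nat
  assumes "1 \<le> I" and "1 \<le> q"
  shows "(\<forall>\<psi>\<in>Dq I q. \<forall>i\<in>{1..I}. phi I \<psi> i \<in> Cupq q \<and>
            (\<forall>u\<ge>0. deriv (extup (phi I \<psi> i)) u > 0))
       \<and> (\<forall>b\<in>barDq I q. (\<forall>i\<in>{0..I}. gam I b i \<in> Cupq q) \<and>
            (\<forall>z\<ge>0. deriv (extup (gam I b 0)) z > 0))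
       \<and> bij_betw (Ups I) (Dq I q) (barDq I q)"
proof (intro conjI ballI allI impI)
  fix \<psi> i u
  assume \<psi>: "\<psi> \<in> Dq I q" and "i \<in> {1..I}"
  then have homeo: "Cup_homeo (phi I \<psi> i)"
    by (intro phi_Cup_homeo) auto
  show "phi I \<psi> i \<in> Cupq q"
    by (rule Cup_homeo_in_Cupq[OF homeo Dq_phi_Ck[OF \<psi>]])
  show "deriv (extup (phi I \<psi> i)) u > 0"
    using deriv_phi_pos[OF \<psi> assms(2)] by (simp add: Cup_homeo_extup[OF homeo])
next
  fix b i
  assume b: "b \<in> barDq I q"
  show "gam I b i \<in> Cupq q"
    using barDq_gam_Cup_homeo_Ck[OF b] by (simp add: Cup_homeo_in_Cupq)
next
  fix b z
  assume b: "b \<in> barDq I q"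
  show "deriv (extup (gam I b 0)) z > 0"
    using barDq_gam_Cup_homeo_Ck[OF b] barDq_deriv_gam_ge_1[OF b assms(2), of 0 z]
    by (simp add: Cup_homeo_extup)
next
  show "bij_betw (Ups I) (Dq I q) (barDq I q)"
    using assms(2) Ups_inv_Ups Ups_Ups_inv Ups_in_barDq Ups_inv_in_Dq
    by (intro bij_betw_byWitness[where f'="Ups_inv I"]) auto
qed

end
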